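(* Let $G$ be a classical subgroup of $\mathrm{GL}(N+1,\mathbb{C})$ (for instance $G=\mathrm{SL}(N+1,\mathbb{C})$), let $V$ and $W$ be finite-dimensional rational complex representations of $G$ equipped with Hermitian norms $\|\cdot\|$, and let $v\in V\setminus\{0\}$, $w\in W\setminus\{0\}$. Define $p_{v,w}:G\to\mathbb{R}$ by $p_{v,w}(\sigma)=\log\|\sigma(w)\|^2-\log\|\sigma(v)\|^2$. Then $p_{v,w}$ is proper along every one-parameter subgroup of $G$ (i.e. $p_{v,w}(\lambda(t))\to+\infty$ as $t\to0$ for every one-parameter subgroup $\lambda$) if and only if $(v,w)$ is numerically stable; and $p_{v,w}$ is bounded from below along every one-parameter subgroup of $G$ (i.e. $p_{v,w}(\lambda(t))$ is bounded below as $t\to0$ for every one-parameter subgroup $\lambda$) if and only if $(v,w)$ is numerically semistable.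
   Context: A one-parameter subgroup of $G$ is a non-trivial algebraic group homomorphism $\lambda:\mathbb{C}^*\to G$. For a representation $V$, $x\in V\setminus\{0\}$ and a one-parameter subgroup $\lambda$, the weight $w_\lambda(x)$ is the unique integer such that $\lim_{\alpha\to0}\alpha^{-w_\lambda(x)}\lambda(\alpha)x$ exists in $V$ and is non-zero. The pair $(v,w)$ is numerically semistable if $w_\lambda(w)\le w_\lambda(v)$ for all one-parameter subgroups $\lambda$ of $G$, and numerically stable if $w_\lambda(w)<w_\lambda(v)$ for all one-parameter subgroups $\lambda$ of $G$. *)

theory Defs
  imports "HOL-Analysis.Analysis"
begin

text \<open>Matrices are indexed by a finite type 'n (so n = CARD('n) = N+1).
  The classical groups: GL, SL, the orthogonal group O(B) and special orthogonal
  group SO(B) of a nondegenerate symmetric bilinear form B, and the symplectic group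
  Sp(B) of a nondegenerate alternating bilinear form B.\<close>

definition GL_grp :: "(complex^'n^'n) set" where
  "GL_grp = {A. det A \<noteq> 0}"

definition SL_grp :: "(complex^'n^'n) set" where
  "SL_grp = {A. det A = 1}"

definition form_grp :: "complex^'n^'n \<Rightarrow> (complex^'n^'n) set" where
  "form_grp B = {A. det A \<noteq> 0 \<and> transpose A ** B ** A = B}"

definition classical_subgroup :: "(complex^'n^'n) set \<Rightarrow> bool" where
  "classical_subgroup G \<longleftrightarrow>
     G = GL_grp \<or> G = SL_grp \<or>
     (\<exists>B. det B \<noteq> 0 \<and> transpose B = B \<and> (G = form_grp B \<or> G = form_grp B \<inter> SL_grp)) \<or>
     (\<exists>B. det B \<noteq> 0 \<and> transpose B = - B \<and> G = form_grp B)"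

text \<open>Polynomial functions in the matrix entries and the inverse of the determinant
  (the regular functions on GL).\<close>

inductive_set regular_fun :: "(complex^'n^'n \<Rightarrow> complex) set" where
  const: "(\<lambda>A. c) \<in> regular_fun"
| entry: "(\<lambda>A. A $ i $ j) \<in> regular_fun"
| invdet: "(\<lambda>A. inverse (det A)) \<in> regular_fun"
| add: "f \<in> regular_fun \<Longrightarrow> g \<in> regular_fun \<Longrightarrow> (\<lambda>A. f A + g A) \<in> regular_fun"
| mult: "f \<in> regular_fun \<Longrightarrow> g \<in> regular_fun \<Longrightarrow> (\<lambda>A. f A * g A) \<in> regular_fun"

definition rational_rep :: "(complex^'n^'n) set \<Rightarrow> (complex^'n^'n \<Rightarrow> complex^'v^'v) \<Rightarrow> bool" where
  "rational_rep G \<rho> \<longleftrightarrow>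
     (\<forall>\<sigma>\<in>G. invertible (\<rho> \<sigma>)) \<and>
     (\<forall>\<sigma>\<in>G. \<forall>\<tau>\<in>G. \<rho> (\<sigma> ** \<tau>) = \<rho> \<sigma> ** \<rho> \<tau>) \<and>
     (\<forall>i j. \<exists>f\<in>regular_fun. \<forall>\<sigma>\<in>G. \<rho> \<sigma> $ i $ j = f \<sigma>)"

definition herm_norm_sq :: "complex^'v^'v \<Rightarrow> complex^'v \<Rightarrow> real" where
  "herm_norm_sq H x = Re (\<Sum>i\<in>UNIV. \<Sum>j\<in>UNIV. cnj (x $ i) * H $ i $ j * x $ j)"

definition hermitian_pd :: "complex^'v^'v \<Rightarrow> bool" where
  "hermitian_pd H \<longleftrightarrow> (\<forall>i j. H $ i $ j = cnj (H $ j $ i)) \<and> (\<forall>x. x \<noteq> 0 \<longrightarrow> herm_norm_sq H x > 0)"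

definition laurent_fun :: "(complex \<Rightarrow> complex) \<Rightarrow> bool" where
  "laurent_fun f \<longleftrightarrow> (\<exists>K c. finite K \<and> (\<forall>\<alpha>. \<alpha> \<noteq> 0 \<longrightarrow> f \<alpha> = (\<Sum>k\<in>K. c k * \<alpha> powi k)))"

text \<open>A non-trivial algebraic group homomorphism C^* \<rightarrow> G (values at 0 are irrelevant).\<close>

definition one_param_subgroup :: "(complex^'n^'n) set \<Rightarrow> (complex \<Rightarrow> complex^'n^'n) \<Rightarrow> bool" where
  "one_param_subgroup G l \<longleftrightarrow>
     (\<forall>\<alpha>. \<alpha> \<noteq> 0 \<longrightarrow> l \<alpha> \<in> G) \<and>
     (\<forall>\<alpha> \<beta>. \<alpha> \<noteq> 0 \<longrightarrow> \<beta> \<noteq> 0 \<longrightarrow> l (\<alpha> * \<beta>) = l \<alpha> ** l \<beta>) \<and>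
     (\<forall>i j. laurent_fun (\<lambda>\<alpha>. l \<alpha> $ i $ j)) \<and>
     (\<exists>\<alpha>. \<alpha> \<noteq> 0 \<and> l \<alpha> \<noteq> mat 1)"

definition weight :: "(complex^'n^'n \<Rightarrow> complex^'v^'v) \<Rightarrow> (complex \<Rightarrow> complex^'n^'n) \<Rightarrow> complex^'v \<Rightarrow> int" where
  "weight \<rho> l x = (THE k::int. \<exists>L. L \<noteq> 0 \<and>
      ((\<lambda>\<alpha>. (\<alpha> powi (- k)) *s (\<rho> (l \<alpha>) *v x)) \<longlongrightarrow> L) (at 0))"

definition num_semistable where
  "num_semistable G \<rho>V \<rho>W v w \<longleftrightarrow>
     (\<forall>l. one_param_subgroup G l \<longrightarrow> weight \<rho>W l w \<le> weight \<rho>V l v)"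

definition num_stable where
  "num_stable G \<rho>V \<rho>W v w \<longleftrightarrow>
     (\<forall>l. one_param_subgroup G l \<longrightarrow> weight \<rho>W l w < weight \<rho>V l v)"

definition p_vw :: "complex^'v^'v \<Rightarrow> complex^'w^'w \<Rightarrow> (complex^'n^'n \<Rightarrow> complex^'v^'v)
    \<Rightarrow> (complex^'n^'n \<Rightarrow> complex^'w^'w) \<Rightarrow> complex^'v \<Rightarrow> complex^'w \<Rightarrow> complex^'n^'n \<Rightarrow> real" where
  "p_vw HV HW \<rho>V \<rho>W v w \<sigma> = ln (herm_norm_sq HW (\<rho>W \<sigma> *v w)) - ln (herm_norm_sq HV (\<rho>V \<sigma> *v v))"

end

theory Submission
  imports Defs "HOL-Computational_Algebra.Polynomial"
begin

text \<open>Along a one-parameter subgroup l, every coordinate of l(a) x is a Laurent polynomial in a,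
  so l(a) x = a^k (L + o(1)) with L \<noteq> 0, where k is the weight of x. Hence
  log \<parallel>l(a) x\<parallel>^2 = 2 k log |a| + O(1), and p_vw(l(a)) = 2 (w_l(v) - w_l(w)) (- log |a|) + O(1).
  As a \<rightarrow> 0 this tends to +\<infinity> iff the coefficient is positive, and stays bounded below iff it
  is nonnegative.\<close>

text \<open>Equivalent to laurent_fun; the polynomial numerator makes the order of vanishing
  at 0 accessible.\<close>

definition laurent_poly_fun :: "(complex \<Rightarrow> complex) \<Rightarrow> bool" where
  "laurent_poly_fun f \<longleftrightarrow> (\<exists>N p. \<forall>\<alpha>. \<alpha> \<noteq> 0 \<longrightarrow> f \<alpha> = poly p \<alpha> / \<alpha> ^ N)"

lemma laurent_poly_fun_cong:
  "laurent_poly_fun f \<Longrightarrow> (\<And>\<alpha>. \<alpha> \<noteq> 0 \<Longrightarrow> g \<alpha> = f \<alpha>) \<Longrightarrow> laurent_poly_fun g"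
  unfolding laurent_poly_fun_def by metis

lemma laurent_poly_fun_const: "laurent_poly_fun (\<lambda>\<alpha>. c)"
  unfolding laurent_poly_fun_def by (rule exI[of _ 0], rule exI[of _ "[:c:]"]) simp

lemma laurent_poly_fun_add:
  assumes "laurent_poly_fun f" "laurent_poly_fun g"
  shows "laurent_poly_fun (\<lambda>\<alpha>. f \<alpha> + g \<alpha>)"
proof -
  obtain N p where p: "\<And>\<alpha>. \<alpha> \<noteq> 0 \<Longrightarrow> f \<alpha> = poly p \<alpha> / \<alpha> ^ N"
    using assms(1) unfolding laurent_poly_fun_def by blast
  obtain M q where q: "\<And>\<alpha>. \<alpha> \<noteq> 0 \<Longrightarrow> g \<alpha> = poly q \<alpha> / \<alpha> ^ M"
    using assms(2) unfolding laurent_poly_fun_def by blast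
  have "f \<alpha> + g \<alpha> = poly (p * monom 1 M + q * monom 1 N) \<alpha> / \<alpha> ^ (N + M)" if "\<alpha> \<noteq> 0" for \<alpha>
    using that by (simp add: p q poly_monom field_simps power_add)
  then show ?thesis unfolding laurent_poly_fun_def by blast
qed

lemma laurent_poly_fun_mult:
  assumes "laurent_poly_fun f" "laurent_poly_fun g"
  shows "laurent_poly_fun (\<lambda>\<alpha>. f \<alpha> * g \<alpha>)"
proof -
  obtain N p where p: "\<And>\<alpha>. \<alpha> \<noteq> 0 \<Longrightarrow> f \<alpha> = poly p \<alpha> / \<alpha> ^ N"
    using assms(1) unfolding laurent_poly_fun_def by blast
  obtain M q where q: "\<And>\<alpha>. \<alpha> \<noteq> 0 \<Longrightarrow> g \<alpha> = poly q \<alpha> / \<alpha> ^ M"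
    using assms(2) unfolding laurent_poly_fun_def by blast
  have "f \<alpha> * g \<alpha> = poly (p * q) \<alpha> / \<alpha> ^ (N + M)" if "\<alpha> \<noteq> 0" for \<alpha>
    using that by (simp add: p q field_simps power_add)
  then show ?thesis unfolding laurent_poly_fun_def by blast
qed

lemma laurent_poly_fun_sum:
  "finite S \<Longrightarrow> (\<And>i. i \<in> S \<Longrightarrow> laurent_poly_fun (f i)) \<Longrightarrow> laurent_poly_fun (\<lambda>\<alpha>. \<Sum>i\<in>S. f i \<alpha>)"
  by (induction S rule: finite_induct) (auto intro: laurent_poly_fun_add laurent_poly_fun_const)

lemma laurent_poly_fun_prod:
  "finite S \<Longrightarrow> (\<And>i. i \<in> S \<Longrightarrow> laurent_poly_fun (f i)) \<Longrightarrow> laurent_poly_fun (\<lambda>\<alpha>. \<Prod>i\<in>S. f i \<alpha>)"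
  by (induction S rule: finite_induct) (auto intro: laurent_poly_fun_mult laurent_poly_fun_const)

lemma laurent_poly_fun_compose_inverse:
  assumes "laurent_poly_fun f"
  shows "laurent_poly_fun (\<lambda>\<alpha>. f (inverse \<alpha>))"
proof -
  obtain N p where p: "\<And>\<alpha>. \<alpha> \<noteq> 0 \<Longrightarrow> f \<alpha> = poly p \<alpha> / \<alpha> ^ N"
    using assms unfolding laurent_poly_fun_def by blast
  have "f (inverse \<alpha>) = poly (reflect_poly p * monom 1 N) \<alpha> / \<alpha> ^ degree p" if "\<alpha> \<noteq> 0" for \<alpha>
    using that by (simp add: p poly_reflect_poly_nz poly_monom field_simps power_inverse)
  then show ?thesis unfolding laurent_poly_fun_def by blast
qed

lemma laurent_poly_fun_det:
  assumes "\<And>i j. laurent_poly_fun (\<lambda>\<alpha>. F \<alpha> $ i $ j)"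
  shows "laurent_poly_fun (\<lambda>\<alpha>. det (F \<alpha>))"
  unfolding det_def
  by (intro laurent_poly_fun_sum laurent_poly_fun_mult laurent_poly_fun_const
      laurent_poly_fun_prod assms) auto

lemma laurent_fun_imp_laurent_poly_fun:
  assumes "laurent_fun f"
  shows "laurent_poly_fun f"
proof -
  obtain K c where K: "finite K" and f: "\<And>\<alpha>. \<alpha> \<noteq> 0 \<Longrightarrow> f \<alpha> = (\<Sum>k\<in>K. c k * \<alpha> powi k)"
    using assms unfolding laurent_fun_def by blast
  define N where "N = (\<Sum>k\<in>K. nat (-k))"
  have shifted_nonneg: "k + int N \<ge> 0" if "k \<in> K" for k
  proof -
    have "nat (-k) \<le> N" unfolding N_def using K that by (intro member_le_sum) auto
    then show ?thesis by linarith
  qed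
  have "f \<alpha> = poly (\<Sum>k\<in>K. monom (c k) (nat (k + int N))) \<alpha> / \<alpha> ^ N" if "\<alpha> \<noteq> 0" for \<alpha>
  proof -
    have "\<alpha> powi k = \<alpha> ^ nat (k + int N) / \<alpha> ^ N" if "k \<in> K" for k
    proof -
      have "\<alpha> ^ nat (k + int N) = \<alpha> powi (k + int N)"
        using shifted_nonneg[OF that] by (simp add: power_int_nonneg_exp)
      also have "\<dots> = \<alpha> powi k * \<alpha> ^ N" using \<open>\<alpha> \<noteq> 0\<close> by (simp add: power_int_add)
      finally show ?thesis using \<open>\<alpha> \<noteq> 0\<close> by simp
    qed
    then show ?thesis
      by (simp add: f[OF that] poly_sum poly_monom sum_divide_distrib)
  qed
  then show ?thesis unfolding laurent_poly_fun_def by blast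
qed

lemma laurent_poly_fun_common_denominator:
  fixes f :: "'i::finite \<Rightarrow> complex \<Rightarrow> complex"
  assumes "\<And>i. laurent_poly_fun (f i)"
  obtains M Q where "\<And>i \<alpha>. \<alpha> \<noteq> 0 \<Longrightarrow> f i \<alpha> = poly (Q i) \<alpha> / \<alpha> ^ M"
proof -
  obtain N P where NP: "\<And>i \<alpha>. \<alpha> \<noteq> 0 \<Longrightarrow> f i \<alpha> = poly (P i) \<alpha> / \<alpha> ^ N i"
    using assms unfolding laurent_poly_fun_def by metis
  define M where "M = (\<Sum>i\<in>UNIV. N i)"
  have "N i \<le> M" for i unfolding M_def by (intro member_le_sum) auto
  then have pow_split: "\<alpha> ^ M = \<alpha> ^ N i * \<alpha> ^ (M - N i)" for \<alpha> :: complex and i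
    by (simp add: power_add[symmetric])
  have "f i \<alpha> = poly (P i * monom 1 (M - N i)) \<alpha> / \<alpha> ^ M" if "\<alpha> \<noteq> 0" for i \<alpha>
    using that by (simp add: NP poly_monom pow_split[of \<alpha> i])
  then show ?thesis by (rule that)
qed

lemma common_power_of_X_factor:
  fixes Q :: "'i::finite \<Rightarrow> 'a::idom poly"
  assumes "Q i\<^sub>0 \<noteq> 0"
  obtains m R where "\<And>i. Q i = [:0, 1:] ^ m * R i" and "\<exists>i. poly (R i) 0 \<noteq> 0"
proof -
  define S where "S = {i. Q i \<noteq> 0}"
  define m where "m = Min ((\<lambda>i. order 0 (Q i)) ` S)"
  have "i\<^sub>0 \<in> S" using assms by (simp add: S_def)
  then have "m \<in> (\<lambda>i. order 0 (Q i)) ` S" unfolding m_def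
    by (intro Min_in) auto
  then obtain i\<^sub>1 where i\<^sub>1: "Q i\<^sub>1 \<noteq> 0" "order 0 (Q i\<^sub>1) = m" by (auto simp: S_def)
  have "[:0, 1:] ^ m dvd Q i" for i
  proof (cases "Q i = 0")
    case False
    then have "m \<le> order 0 (Q i)" unfolding m_def S_def by (intro Min_le) auto
    then have "[:0, 1:] ^ m dvd [:0, 1:] ^ order 0 (Q i)" by (rule le_imp_power_dvd)
    moreover have "[:0, 1:] ^ order 0 (Q i) dvd Q i" using order_1[of 0 "Q i"] by simp
    ultimately show ?thesis by (rule dvd_trans)
  qed simp
  then obtain R where QR: "Q i = [:0, 1:] ^ m * R i" for i
    unfolding dvd_def by metis
  have "poly (R i\<^sub>1) 0 \<noteq> 0"
  proof
    assume "poly (R i\<^sub>1) 0 = 0"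
    then have "[:0, 1:] dvd R i\<^sub>1" by (simp add: poly_eq_0_iff_dvd)
    then have "[:0, 1:] ^ m * [:0, 1:] dvd Q i\<^sub>1"
      unfolding QR[of i\<^sub>1] by (rule mult_dvd_mono[OF dvd_refl])
    then show False using order_2[of "Q i\<^sub>1" 0] i\<^sub>1 by (simp add: power_Suc2)
  qed
  with QR show ?thesis using that by blast
qed

lemma tendsto_vector_smult [tendsto_intros]:
  fixes c :: "'a \<Rightarrow> 'b::real_normed_field" and y :: "'a \<Rightarrow> 'b^'n"
  assumes "(c \<longlongrightarrow> a) F" "(y \<longlongrightarrow> b) F"
  shows "((\<lambda>t. c t *s y t) \<longlongrightarrow> a *s b) F"
proof -
  have "((\<lambda>t. \<chi> i. c t * y t $ i) \<longlongrightarrow> (\<chi> i. a * b $ i)) F"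
    by (intro tendsto_intros assms)
  then show ?thesis by (simp add: vec_eq_iff[of "_ *s _"] vector_scalar_mult_def)
qed

lemma laurent_poly_vec_leading_term:
  fixes x :: "complex \<Rightarrow> complex^'v"
  assumes coords: "\<And>i. laurent_poly_fun (\<lambda>\<alpha>. x \<alpha> $ i)"
    and "\<alpha>\<^sub>0 \<noteq> 0" "x \<alpha>\<^sub>0 \<noteq> 0"
  obtains k L where "L \<noteq> 0" "((\<lambda>\<alpha>. \<alpha> powi (- k) *s x \<alpha>) \<longlongrightarrow> L) (at 0)"
proof -
  obtain M Q where xQ: "\<And>i \<alpha>. \<alpha> \<noteq> 0 \<Longrightarrow> x \<alpha> $ i = poly (Q i) \<alpha> / \<alpha> ^ M"
    by (rule laurent_poly_fun_common_denominator[of "\<lambda>i \<alpha>. x \<alpha> $ i", OF coords]) blast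
  obtain i\<^sub>0 where "x \<alpha>\<^sub>0 $ i\<^sub>0 \<noteq> 0" using \<open>x \<alpha>\<^sub>0 \<noteq> 0\<close> by (auto simp: vec_eq_iff)
  then have "Q i\<^sub>0 \<noteq> 0" using xQ[OF \<open>\<alpha>\<^sub>0 \<noteq> 0\<close>] by auto
  then obtain m R where QR: "\<And>i. Q i = [:0, 1:] ^ m * R i" and R0: "\<exists>i. poly (R i) 0 \<noteq> 0"
    by (rule common_power_of_X_factor) blast
  define L where "L = (\<chi> i. poly (R i) 0)"
  have "L \<noteq> 0" using R0 by (auto simp: L_def vec_eq_iff)
  have "((\<lambda>\<alpha>. \<chi> i. poly (R i) \<alpha>) \<longlongrightarrow> L) (at 0)"
    unfolding L_def by (intro tendsto_intros)
  moreover have "\<forall>\<^sub>F \<alpha> in at 0. (\<chi> i. poly (R i) \<alpha>) = \<alpha> powi (- (int m - int M)) *s x \<alpha>"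
    unfolding eventually_at_filter
  proof (intro always_eventually allI impI)
    fix \<alpha> :: complex
    assume "\<alpha> \<noteq> 0"
    then have "\<alpha> powi (int M - int m) * \<alpha> ^ m = \<alpha> ^ M"
      using power_int_add[of \<alpha> "int M - int m" "int m"] by simp
    then show "(\<chi> i. poly (R i) \<alpha>) = \<alpha> powi (- (int m - int M)) *s x \<alpha>"
      using \<open>\<alpha> \<noteq> 0\<close> by (auto simp: vec_eq_iff xQ QR field_simps)
  qed
  ultimately have "((\<lambda>\<alpha>. \<alpha> powi (- (int m - int M)) *s x \<alpha>) \<longlongrightarrow> L) (at 0)"
    by (rule Lim_transform_eventually)
  with \<open>L \<noteq> 0\<close> show thesis by (rule that)
qed

lemma leading_exponent_le:
  fixes x :: "complex \<Rightarrow> complex^'v"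
  assumes "((\<lambda>\<alpha>. \<alpha> powi (- k) *s x \<alpha>) \<longlongrightarrow> L) (at 0)" "L \<noteq> 0"
    and "((\<lambda>\<alpha>. \<alpha> powi (- k') *s x \<alpha>) \<longlongrightarrow> L') (at 0)"
  shows "k' \<le> k"
proof (rule ccontr)
  assume "\<not> k' \<le> k"
  have "((\<lambda>\<alpha>. \<alpha> ^ nat (k' - k) *s (\<alpha> powi (- k') *s x \<alpha>)) \<longlongrightarrow> 0 ^ nat (k' - k) *s L') (at 0)"
    by (intro tendsto_intros assms(3))
  then have lim0: "((\<lambda>\<alpha>. \<alpha> ^ nat (k' - k) *s (\<alpha> powi (- k') *s x \<alpha>)) \<longlongrightarrow> 0) (at 0)"
    using \<open>\<not> k' \<le> k\<close> by (simp add: power_0_left)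
  have "\<forall>\<^sub>F \<alpha> in at 0. \<alpha> ^ nat (k' - k) *s (\<alpha> powi (- k') *s x \<alpha>) = \<alpha> powi (- k) *s x \<alpha>"
    unfolding eventually_at_filter
  proof (intro always_eventually allI impI)
    fix \<alpha> :: complex
    assume "\<alpha> \<noteq> 0"
    have "\<alpha> ^ nat (k' - k) * \<alpha> powi (- k') = \<alpha> powi (k' - k) * \<alpha> powi (- k')"
      using \<open>\<not> k' \<le> k\<close> by (simp add: power_int_nonneg_exp)
    also have "\<dots> = \<alpha> powi (- k)" using \<open>\<alpha> \<noteq> 0\<close> by (simp add: power_int_add[symmetric])
    finally show "\<alpha> ^ nat (k' - k) *s (\<alpha> powi (- k') *s x \<alpha>) = \<alpha> powi (- k) *s x \<alpha>"
      by (simp add: vector_smult_assoc)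
  qed
  with lim0 have "((\<lambda>\<alpha>. \<alpha> powi (- k) *s x \<alpha>) \<longlongrightarrow> 0) (at 0)"
    by (rule Lim_transform_eventually)
  with assms(1) have "L = 0" by (rule tendsto_unique[rotated]) simp
  with \<open>L \<noteq> 0\<close> show False ..
qed

lemma weight_eqI:
  assumes "L \<noteq> 0" "((\<lambda>\<alpha>. \<alpha> powi (- k) *s (\<rho> (l \<alpha>) *v x)) \<longlongrightarrow> L) (at 0)"
  shows "weight \<rho> l x = k"
  unfolding weight_def
proof (rule the_equality)
  show "\<exists>L. L \<noteq> 0 \<and> ((\<lambda>\<alpha>. \<alpha> powi (- k) *s (\<rho> (l \<alpha>) *v x)) \<longlongrightarrow> L) (at 0)"
    using assms by blast
next
  fix k'
  assume "\<exists>L'. L' \<noteq> 0 \<and> ((\<lambda>\<alpha>. \<alpha> powi (- k') *s (\<rho> (l \<alpha>) *v x)) \<longlongrightarrow> L') (at 0)"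
  then obtain L' where "L' \<noteq> 0" "((\<lambda>\<alpha>. \<alpha> powi (- k') *s (\<rho> (l \<alpha>) *v x)) \<longlongrightarrow> L') (at 0)"
    by blast
  with assms show "k' = k"
    using leading_exponent_le[where x = "\<lambda>\<alpha>. \<rho> (l \<alpha>) *v x"] by (meson order_antisym)
qed

lemma classical_subgroup_subset_GL: "classical_subgroup G \<Longrightarrow> G \<subseteq> GL_grp"
  unfolding classical_subgroup_def GL_grp_def SL_grp_def form_grp_def by auto

lemma one_param_subgroup_one:
  assumes "G \<subseteq> GL_grp" "one_param_subgroup G l"
  shows "l 1 = mat 1"
proof -
  have "l 1 \<in> G" "l 1 = l 1 ** l 1"
    using assms(2) unfolding one_param_subgroup_def by (metis mult_1 one_neq_zero)+
  moreover obtain B where "B ** l 1 = mat 1"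
    using \<open>l 1 \<in> G\<close> assms(1) invertible_det_nz unfolding GL_grp_def invertible_def by blast
  ultimately show ?thesis by (metis matrix_mul_assoc matrix_mul_lid)
qed

lemma det_one_param_subgroup_inverse:
  assumes "G \<subseteq> GL_grp" "one_param_subgroup G l" "\<alpha> \<noteq> 0"
  shows "inverse (det (l \<alpha>)) = det (l (inverse \<alpha>))"
proof -
  have "l \<alpha> ** l (inverse \<alpha>) = l 1"
    using assms(2,3) unfolding one_param_subgroup_def by (metis right_inverse inverse_nonzero_iff_nonzero)
  then have "det (l \<alpha>) * det (l (inverse \<alpha>)) = 1"
    using one_param_subgroup_one[OF assms(1,2)] by (metis det_mul det_I)
  then show ?thesis by (rule inverse_unique)
qed

lemma laurent_poly_fun_one_param_subgroup_entry:
  "one_param_subgroup G l \<Longrightarrow> laurent_poly_fun (\<lambda>\<alpha>. l \<alpha> $ i $ j)"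
  unfolding one_param_subgroup_def by (auto intro: laurent_fun_imp_laurent_poly_fun)

lemma laurent_poly_fun_regular_fun:
  assumes "G \<subseteq> GL_grp" "one_param_subgroup G l" "f \<in> regular_fun"
  shows "laurent_poly_fun (\<lambda>\<alpha>. f (l \<alpha>))"
  using assms(3)
proof induction
  case (const c)
  show ?case by (rule laurent_poly_fun_const)
next
  case (entry i j)
  show ?case using assms(2) by (rule laurent_poly_fun_one_param_subgroup_entry)
next
  case invdet
  have "laurent_poly_fun (\<lambda>\<alpha>. det (l (inverse \<alpha>)))"
    by (intro laurent_poly_fun_det laurent_poly_fun_compose_inverse[where f = "\<lambda>\<alpha>. l \<alpha> $ _ $ _"]
        laurent_poly_fun_one_param_subgroup_entry[OF assms(2)])
  then show ?case
    by (rule laurent_poly_fun_cong) (simp add: det_one_param_subgroup_inverse[OF assms(1,2)])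
next
  case (add f g)
  then show ?case by (intro laurent_poly_fun_add)
next
  case (mult f g)
  then show ?case by (intro laurent_poly_fun_mult)
qed

lemma laurent_poly_fun_orbit:
  assumes "G \<subseteq> GL_grp" "one_param_subgroup G l" "rational_rep G \<rho>"
  shows "laurent_poly_fun (\<lambda>\<alpha>. (\<rho> (l \<alpha>) *v x) $ i)"
proof -
  have "laurent_poly_fun (\<lambda>\<alpha>. \<rho> (l \<alpha>) $ i $ j)" for i j
  proof -
    obtain f where f: "f \<in> regular_fun" "\<And>\<sigma>. \<sigma> \<in> G \<Longrightarrow> \<rho> \<sigma> $ i $ j = f \<sigma>"
      using assms(3) unfolding rational_rep_def by blast
    show ?thesis
      using laurent_poly_fun_regular_fun[OF assms(1,2) f(1)]
      by (rule laurent_poly_fun_cong) (use f(2) assms(2) in \<open>simp add: one_param_subgroup_def\<close>)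
  qed
  then show ?thesis unfolding matrix_vector_mult_def
    by (simp, intro laurent_poly_fun_sum laurent_poly_fun_mult laurent_poly_fun_const) auto
qed

lemma orbit_nonzero:
  assumes "one_param_subgroup G l" "rational_rep G \<rho>" "x \<noteq> 0" "\<alpha> \<noteq> 0"
  shows "\<rho> (l \<alpha>) *v x \<noteq> 0"
proof -
  have "l \<alpha> \<in> G" using assms(1,4) unfolding one_param_subgroup_def by blast
  then obtain B where "B ** \<rho> (l \<alpha>) = mat 1"
    using assms(2) unfolding rational_rep_def invertible_def by blast
  then have "B *v (\<rho> (l \<alpha>) *v x) = x" by (simp add: matrix_vector_mul_assoc)
  with assms(3) show ?thesis by auto
qed

lemma weight_limit:
  assumes "G \<subseteq> GL_grp" "one_param_subgroup G l" "rational_rep G \<rho>" "x \<noteq> 0"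
  obtains L where "L \<noteq> 0" "((\<lambda>\<alpha>. \<alpha> powi (- weight \<rho> l x) *s (\<rho> (l \<alpha>) *v x)) \<longlongrightarrow> L) (at 0)"
proof -
  obtain k L where "L \<noteq> 0" "((\<lambda>\<alpha>. \<alpha> powi (- k) *s (\<rho> (l \<alpha>) *v x)) \<longlongrightarrow> L) (at 0)"
    using laurent_poly_vec_leading_term[OF laurent_poly_fun_orbit[OF assms(1-3)] one_neq_zero
        orbit_nonzero[OF assms(2-4) one_neq_zero]] .
  moreover from this have "weight \<rho> l x = k" by (rule weight_eqI)
  ultimately show thesis by (intro that) simp_all
qed

lemma herm_norm_sq_smult: "herm_norm_sq H (c *s y) = (cmod c)\<^sup>2 * herm_norm_sq H y"
proof -
  have "(\<Sum>i\<in>UNIV. \<Sum>j\<in>UNIV. cnj ((c *s y) $ i) * H $ i $ j * (c *s y) $ j)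
      = (c * cnj c) * (\<Sum>i\<in>UNIV. \<Sum>j\<in>UNIV. cnj (y $ i) * H $ i $ j * y $ j)"
    by (simp add: sum_distrib_left mult_ac)
  also have "c * cnj c = of_real ((cmod c)\<^sup>2)" using complex_norm_square[of c] by simp
  finally show ?thesis unfolding herm_norm_sq_def by simp
qed

lemma tendsto_herm_norm_sq [tendsto_intros]:
  "(y \<longlongrightarrow> L) F \<Longrightarrow> ((\<lambda>t. herm_norm_sq H (y t)) \<longlongrightarrow> herm_norm_sq H L) F"
  unfolding herm_norm_sq_def by (intro tendsto_intros)

lemma ln_herm_norm_sq_rescale:
  assumes "\<alpha> \<noteq> 0" "0 < herm_norm_sq H (\<alpha> powi (- k) *s X)"
  shows "ln (herm_norm_sq H X) = 2 * of_int k * ln (cmod \<alpha>) + ln (herm_norm_sq H (\<alpha> powi (- k) *s X))"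
proof -
  have "X = \<alpha> powi k *s (\<alpha> powi (- k) *s X)"
    using assms(1) by (simp add: vector_smult_assoc power_int_minus)
  then have "herm_norm_sq H X = (cmod \<alpha> powi k)\<^sup>2 * herm_norm_sq H (\<alpha> powi (- k) *s X)"
    by (metis herm_norm_sq_smult norm_power_int)
  moreover have "ln ((cmod \<alpha> powi k)\<^sup>2) = 2 * of_int k * ln (cmod \<alpha>)"
    using assms(1) by (simp add: ln_realpow powr_real_of_int'[symmetric])
  ultimately show ?thesis using assms by (simp add: ln_mult)
qed

lemma ln_herm_norm_sq_orbit:
  assumes "G \<subseteq> GL_grp" "one_param_subgroup G l" "rational_rep G \<rho>" "hermitian_pd H" "x \<noteq> 0"
  obtains g c where "(g \<longlongrightarrow> c) (at 0)"
    and "\<forall>\<^sub>F \<alpha> in at 0. ln (herm_norm_sq H (\<rho> (l \<alpha>) *v x)) = 2 * of_int (weight \<rho> l x) * ln (cmod \<alpha>) + g \<alpha>"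
proof -
  define y where "y \<alpha> = \<alpha> powi (- weight \<rho> l x) *s (\<rho> (l \<alpha>) *v x)" for \<alpha>
  obtain L where "L \<noteq> 0" "(y \<longlongrightarrow> L) (at 0)"
    using weight_limit[OF assms(1,2,3,5)] unfolding y_def by blast
  then have pos: "0 < herm_norm_sq H L" and lim: "((\<lambda>\<alpha>. herm_norm_sq H (y \<alpha>)) \<longlongrightarrow> herm_norm_sq H L) (at 0)"
    using assms(4) unfolding hermitian_pd_def by (auto intro: tendsto_intros)
  have "((\<lambda>\<alpha>. ln (herm_norm_sq H (y \<alpha>))) \<longlongrightarrow> ln (herm_norm_sq H L)) (at 0)"
    using lim pos by (intro tendsto_ln) auto
  moreover have "\<forall>\<^sub>F \<alpha> in at 0. ln (herm_norm_sq H (\<rho> (l \<alpha>) *v x))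
      = 2 * of_int (weight \<rho> l x) * ln (cmod \<alpha>) + ln (herm_norm_sq H (y \<alpha>))"
    using order_tendstoD(1)[OF lim pos] eventually_neq_at_within[of 0 0 UNIV]
    by eventually_elim (simp add: y_def ln_herm_norm_sq_rescale)
  ultimately show thesis by (rule that)
qed

lemma filterlim_neg_ln_norm_at_0:
  "filterlim (\<lambda>x::'a::real_normed_vector. - ln (norm x)) at_top (at 0)"
proof -
  have "filterlim norm (at_right 0) (at (0::'a))"
    unfolding filterlim_at by (auto simp: eventually_at_filter intro: tendsto_norm_zero tendsto_ident_at)
  then show ?thesis
    unfolding filterlim_uminus_at_top[of "\<lambda>x. - ln (norm x)", simplified]
    by (rule filterlim_compose[OF ln_at_0])
qed

lemma filterlim_at_top_scaled_plus_convergent_iff: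
  fixes h g :: "'a \<Rightarrow> real"
  assumes h: "filterlim h at_top F" and g: "(g \<longlongrightarrow> c) F" and "F \<noteq> bot"
  shows "filterlim (\<lambda>x. d * h x + g x) at_top F \<longleftrightarrow> 0 < d"
proof
  assume lim: "filterlim (\<lambda>x. d * h x + g x) at_top F"
  show "0 < d"
  proof (rule ccontr)
    assume "\<not> 0 < d"
    have "\<forall>\<^sub>F x in F. c + 1 \<le> d * h x + g x" using lim by (simp add: filterlim_at_top)
    moreover have "\<forall>\<^sub>F x in F. g x < c + 1" using g by (rule order_tendstoD) simp
    moreover have "\<forall>\<^sub>F x in F. d * h x \<le> 0"
      using h unfolding filterlim_at_top
      by (rule eventually_mono[OF spec[of _ 0]]) (use \<open>\<not> 0 < d\<close> in \<open>simp add: mult_nonpos_nonneg\<close>)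
    ultimately have "\<forall>\<^sub>F x in F. False" by eventually_elim simp
    with \<open>F \<noteq> bot\<close> show False by (simp add: eventually_False)
  qed
next
  assume "0 < d"
  then have "filterlim (\<lambda>x. d * h x) at_top F"
    by (intro filterlim_tendsto_pos_mult_at_top[OF tendsto_const _ h])
  then have "filterlim (\<lambda>x. g x + d * h x) at_top F"
    by (rule filterlim_tendsto_add_at_top[OF g])
  then show "filterlim (\<lambda>x. d * h x + g x) at_top F" by (simp only: add.commute)
qed

lemma bounded_below_scaled_plus_convergent_iff:
  fixes h g :: "'a \<Rightarrow> real"
  assumes h: "filterlim h at_top F" and g: "(g \<longlongrightarrow> c) F" and "F \<noteq> bot"
  shows "(\<exists>C. \<forall>\<^sub>F x in F. C \<le> d * h x + g x) \<longleftrightarrow> 0 \<le> d"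
proof
  assume "\<exists>C. \<forall>\<^sub>F x in F. C \<le> d * h x + g x"
  then obtain C where C: "\<forall>\<^sub>F x in F. C \<le> d * h x + g x" by blast
  show "0 \<le> d"
  proof (rule ccontr)
    assume "\<not> 0 \<le> d"
    then have "filterlim (\<lambda>x. (- d) * h x + - g x) at_top F"
      by (intro filterlim_at_top_scaled_plus_convergent_iff[OF h tendsto_minus[OF g] \<open>F \<noteq> bot\<close>, THEN iffD2])
        simp
    then have "\<forall>\<^sub>F x in F. 1 - C \<le> (- d) * h x + - g x" by (simp add: filterlim_at_top)
    with C have "\<forall>\<^sub>F x in F. False" by eventually_elim simp
    with \<open>F \<noteq> bot\<close> show False by (simp add: eventually_False)
  qed
next
  assume "0 \<le> d"
  have "\<forall>\<^sub>F x in F. c - 1 < g x" using g by (rule order_tendstoD) simp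
  moreover have "\<forall>\<^sub>F x in F. 0 \<le> h x" using h by (simp add: filterlim_at_top)
  ultimately have "\<forall>\<^sub>F x in F. c - 1 \<le> d * h x + g x"
    by eventually_elim (use \<open>0 \<le> d\<close> in \<open>simp add: add_increasing\<close>)
  then show "\<exists>C. \<forall>\<^sub>F x in F. C \<le> d * h x + g x" by blast
qed

lemma p_vw_one_param_subgroup:
  fixes \<rho>V :: "complex^'n^'n \<Rightarrow> complex^'v^'v" and \<rho>W :: "complex^'n^'n \<Rightarrow> complex^'w^'w"
  assumes "G \<subseteq> GL_grp" "one_param_subgroup G l"
    and "rational_rep G \<rho>V" "rational_rep G \<rho>W" "hermitian_pd HV" "hermitian_pd HW" "v \<noteq> 0" "w \<noteq> 0"
  shows "filterlim (\<lambda>t. p_vw HV HW \<rho>V \<rho>W v w (l t)) at_top (at 0)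
           \<longleftrightarrow> weight \<rho>W l w < weight \<rho>V l v"
    and "(\<exists>C. \<forall>\<^sub>F t in at 0. C \<le> p_vw HV HW \<rho>V \<rho>W v w (l t))
           \<longleftrightarrow> weight \<rho>W l w \<le> weight \<rho>V l v"
proof -
  obtain gV cV where gV: "(gV \<longlongrightarrow> cV) (at 0)" and V: "\<forall>\<^sub>F t in at 0.
      ln (herm_norm_sq HV (\<rho>V (l t) *v v)) = 2 * of_int (weight \<rho>V l v) * ln (cmod t) + gV t"
    by (rule ln_herm_norm_sq_orbit[OF assms(1,2,3,5,7)])
  obtain gW cW where gW: "(gW \<longlongrightarrow> cW) (at 0)" and W: "\<forall>\<^sub>F t in at 0.
      ln (herm_norm_sq HW (\<rho>W (l t) *v w)) = 2 * of_int (weight \<rho>W l w) * ln (cmod t) + gW t"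
    by (rule ln_herm_norm_sq_orbit[OF assms(1,2,4,6,8)])
  define d where "d = 2 * real_of_int (weight \<rho>V l v - weight \<rho>W l w)"
  define g where "g t = gW t - gV t" for t
  have ev: "\<forall>\<^sub>F t in at 0. p_vw HV HW \<rho>V \<rho>W v w (l t) = d * - ln (cmod t) + g t"
    using V W by eventually_elim (simp add: p_vw_def d_def g_def algebra_simps)
  have "(g \<longlongrightarrow> cW - cV) (at 0)" unfolding g_def by (intro tendsto_diff gV gW)
  note asymptotics = filterlim_at_top_scaled_plus_convergent_iff[OF filterlim_neg_ln_norm_at_0 this]
    bounded_below_scaled_plus_convergent_iff[OF filterlim_neg_ln_norm_at_0 this]
  show "filterlim (\<lambda>t. p_vw HV HW \<rho>V \<rho>W v w (l t)) at_top (at 0)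
           \<longleftrightarrow> weight \<rho>W l w < weight \<rho>V l v"
    using asymptotics(1)[of d] filterlim_cong[OF refl refl ev] by (simp add: d_def)
  have "(\<forall>\<^sub>F t in at 0. C \<le> p_vw HV HW \<rho>V \<rho>W v w (l t)) \<longleftrightarrow> (\<forall>\<^sub>F t in at 0. C \<le> d * - ln (cmod t) + g t)"
    for C by (rule eventually_subst) (rule eventually_mono[OF ev], simp)
  then show "(\<exists>C. \<forall>\<^sub>F t in at 0. C \<le> p_vw HV HW \<rho>V \<rho>W v w (l t))
           \<longleftrightarrow> weight \<rho>W l w \<le> weight \<rho>V l v"
    using asymptotics(2)[of d] by (simp add: d_def)
qed

theorem theorem4p3:
  fixes G :: "(complex^'n^'n) set"
    and \<rho>V :: "complex^'n^'n \<Rightarrow> complex^'v^'v"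
    and \<rho>W :: "complex^'n^'n \<Rightarrow> complex^'w^'w"
    and HV :: "complex^'v^'v" and HW :: "complex^'w^'w"
    and v :: "complex^'v" and w :: "complex^'w"
  assumes "classical_subgroup G"
    and "rational_rep G \<rho>V" and "rational_rep G \<rho>W"
    and "hermitian_pd HV" and "hermitian_pd HW"
    and "v \<noteq> 0" and "w \<noteq> 0"
  shows "((\<forall>l. one_param_subgroup G l \<longrightarrow>
            filterlim (\<lambda>t. p_vw HV HW \<rho>V \<rho>W v w (l t)) at_top (at (0::complex)))
         \<longleftrightarrow> num_stable G \<rho>V \<rho>W v w)
         \<and> ((\<forall>l. one_param_subgroup G l \<longrightarrow>
            (\<exists>C. \<forall>\<^sub>F t in at (0::complex). C \<le> p_vw HV HW \<rho>V \<rho>W v w (l t)))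
         \<longleftrightarrow> num_semistable G \<rho>V \<rho>W v w)"
  unfolding num_stable_def num_semistable_def
  using p_vw_one_param_subgroup[OF classical_subgroup_subset_GL[OF assms(1)] _ assms(2-7)]
  by blast

end
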